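(* Fix a positive integer $n$ and a nonzero $n$-partition $\lambda$ with $\lambda_n=0$. For every $n$-semistandard tableau $T$ of shape $\lambda$, $Y_\lambda(\pi_T)=S(T)$.
   Context: Identify $\lambda=(\lambda_1,\dots,\lambda_n)$ with its Young diagram; $c_j$ is the length of column $j$; $\zeta_1<\dots<\zeta_d$ are the distinct column lengths. For a permutation $\phi$ (one-line form), $Y_\lambda(\phi)$ is the tableau of shape $\lambda$ whose columns of length $\zeta_h$ contain $\phi_1,\dots,\phi_{\zeta_h}$ in increasing order ($1\le h\le d$). Write $(j,i)$ for the box in column $j$, row $i$. Reading order: $(l,k)\le(j,i)$ iff $l<j$, or $l=j$ and $k\ge i$; convention $(j,c_j+1)$ means $(j-1,1)$. An $n$-semistandard tableau $T$ of shape $\lambda$ has entries in $[n]$, weakly increasing along rows, strictly increasing down columns; $T(j,i)$ is its entry, $C_j$ its $j$-th column. Scanning tableau: the EWIS of a sequence $x_1,x_2,\dots$ is $x_{a_1},x_{a_2},\dots$ with $a_1=1$ and $a_b$ the smallest index $>a_{b-1}$ with $x_{a_b}\ge x_{a_{b-1}}$. For each column $j$ and $i=c_j,\dots,1$ in turn: delete the boxes of previously computed $P(T;j,k)$, $k>i$; form the sequence of entries in the lowest box of each of columns $j,\dots,\lambda_1$ of the current shape (skipping empty columns); $P(T;j,i)$ is the set of locations of the terms of its EWIS. $S(T)$ is the filling of $\lambda$ whose entry at $(j,i)$ is $T$ at the last location of $P(T;j,i)$. Greedy procedure: $\pi^{(1,1)}$ has first $c_1$ entries those of $C_1$ increasing,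 followed by the rest of $[n]$ increasing. For $(j,i)$ with $j\ge2$ in reading order from $(2,c_2)$ to $(\lambda_1,1)$, define $\pi^{(j,i)}$ from $\pi:=\pi^{(j,i+1)}$: if $T(j-1,i)=T(j,i)$ set $\pi^{(j,i)}=\pi$; otherwise let $i_0=i$, and given $i_{x-1}$ with $\pi_{i_{x-1}}<T(j,i)$ let $i_x$ be the smallest index $>c_j$ with $\pi_{i_{x-1}}<\pi_{i_x}\le T(j,i)$, stopping at $i_m$ with $\pi_{i_m}=T(j,i)$; set $\pi^{(j,i)}_{i_x}=\pi_{i_{x-1}}$ ($1\le x\le m$), $\pi^{(j,i)}_{i_0}=\pi_{i_m}$, others unchanged. $\pi_T:=\pi^{(\lambda_1,1)}$. *)

theory Defs
  imports Main
begin

(* An n-partition lambda = (lambda_1,...,lambda_n) is a list lam of length n,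
   with lam ! (k-1) = lambda_k.  Boxes are pairs (j,i) = (column j, row i),
   1-based.  Tableaux and fillings are functions nat => nat => nat, T j i being
   the entry in box (j,i); only values on boxes of the shape matter.
   Permutations in one-line form are functions nat => nat, phi p being phi_p
   for positions p in {1..n}. *)

definition is_partition :: "nat \<Rightarrow> nat list \<Rightarrow> bool" where
  "is_partition n lam \<longleftrightarrow> length lam = n \<and> sorted_wrt (\<ge>) lam"

definition lam1 :: "nat list \<Rightarrow> nat" where
  "lam1 lam = lam ! 0"

definition col_len :: "nat list \<Rightarrow> nat \<Rightarrow> nat" where
  "col_len lam j = length (filter (\<lambda>r. j \<le> r) lam)"

definition shape :: "nat list \<Rightarrow> (nat \<times> nat) set" where
  "shape lam = {(j, i). 1 \<le> j \<and> j \<le> lam1 lam \<and> 1 \<le> i \<and> i \<le> col_len lam j}"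

definition semistandard :: "nat \<Rightarrow> nat list \<Rightarrow> (nat \<Rightarrow> nat \<Rightarrow> nat) \<Rightarrow> bool" where
  "semistandard n lam T \<longleftrightarrow>
     (\<forall>(j, i) \<in> shape lam. 1 \<le> T j i \<and> T j i \<le> n) \<and>
     (\<forall>j i. (j, i) \<in> shape lam \<and> (j + 1, i) \<in> shape lam \<longrightarrow> T j i \<le> T (j + 1) i) \<and>
     (\<forall>j i. (j, i) \<in> shape lam \<and> (j, i + 1) \<in> shape lam \<longrightarrow> T j i < T j (i + 1))"

definition Ytab :: "nat list \<Rightarrow> (nat \<Rightarrow> nat) \<Rightarrow> nat \<Rightarrow> nat \<Rightarrow> nat" where
  "Ytab lam phi j i = sorted_list_of_set (phi ` {1..col_len lam j}) ! (i - 1)"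

(* earliest weakly increasing subsequence of a sequence of (location, value) pairs *)
function ewis :: "('l \<times> nat) list \<Rightarrow> ('l \<times> nat) list" where
  "ewis [] = []"
| "ewis (x # xs) = x # ewis (dropWhile (\<lambda>y. snd y < snd x) xs)"
  by pat_completeness auto
termination
  by (relation "measure length") (auto simp: le_imp_less_Suc length_dropWhile_le)

definition rem_rows :: "nat list \<Rightarrow> (nat \<times> nat) set \<Rightarrow> nat \<Rightarrow> nat set" where
  "rem_rows lam D l = {k. 1 \<le> k \<and> k \<le> col_len lam l \<and> (l, k) \<notin> D}"

definition low_seq :: "nat list \<Rightarrow> (nat \<Rightarrow> nat \<Rightarrow> nat) \<Rightarrow> nat \<Rightarrow> (nat \<times> nat) set
                        \<Rightarrow> ((nat \<times> nat) \<times> nat) list" where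
  "low_seq lam T j D =
     concat (map (\<lambda>l. if rem_rows lam D l = {} then []
                      else [((l, Max (rem_rows lam D l)), T l (Max (rem_rows lam D l)))])
                 [j..<lam1 lam + 1])"

definition scan_path :: "nat list \<Rightarrow> (nat \<Rightarrow> nat \<Rightarrow> nat) \<Rightarrow> nat \<Rightarrow> (nat \<times> nat) set
                          \<Rightarrow> (nat \<times> nat) list" where
  "scan_path lam T j D = map fst (ewis (low_seq lam T j D))"

(* boxes deleted in column j after computing P(T;j,c_j),...,P(T;j,c_j-m+1) *)
primrec scan_del :: "nat list \<Rightarrow> (nat \<Rightarrow> nat \<Rightarrow> nat) \<Rightarrow> nat \<Rightarrow> nat \<Rightarrow> (nat \<times> nat) set" where
  "scan_del lam T j 0 = {}"
| "scan_del lam T j (Suc m) = scan_del lam T j m \<union> set (scan_path lam T j (scan_del lam T j m))"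

(* P(T;j,i), as the list of its locations in order *)
definition scanP :: "nat list \<Rightarrow> (nat \<Rightarrow> nat \<Rightarrow> nat) \<Rightarrow> nat \<Rightarrow> nat \<Rightarrow> (nat \<times> nat) list" where
  "scanP lam T j i = scan_path lam T j (scan_del lam T j (col_len lam j - i))"

definition scanS :: "nat list \<Rightarrow> (nat \<Rightarrow> nat \<Rightarrow> nat) \<Rightarrow> nat \<Rightarrow> nat \<Rightarrow> nat" where
  "scanS lam T j i = (case last (scanP lam T j i) of (l, k) \<Rightarrow> T l k)"

definition pi11 :: "nat \<Rightarrow> nat list \<Rightarrow> (nat \<Rightarrow> nat \<Rightarrow> nat) \<Rightarrow> nat \<Rightarrow> nat" where
  "pi11 n lam T p =
     (if 1 \<le> p \<and> p \<le> col_len lam 1 then T 1 p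
      else sorted_list_of_set ({1..n} - T 1 ` {1..col_len lam 1}) ! (p - col_len lam 1 - 1))"

(* the indices i_1, i_2, ... following index p: next index is the smallest
   q > c with pi p < pi q <= t; stops when pi of the current index equals t
   (fuel bounds the length; fallback: stop if no such index exists) *)
fun chain :: "(nat \<Rightarrow> nat) \<Rightarrow> nat \<Rightarrow> nat \<Rightarrow> nat \<Rightarrow> nat \<Rightarrow> nat \<Rightarrow> nat list" where
  "chain pi n c t p 0 = []"
| "chain pi n c t p (Suc f) =
     (if pi p = t then []
      else if (\<exists>q. c < q \<and> q \<le> n \<and> pi p < pi q \<and> pi q \<le> t)
      then (let q = (LEAST q. c < q \<and> q \<le> n \<and> pi p < pi q \<and> pi q \<le> t)
            in q # chain pi n c t q f)
      else [])"

(* for idx = [i_0,...,i_m]: new value at i_x is old value at i_{x-1} (1<=x<=m),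
   new value at i_0 is old value at i_m, others unchanged *)
definition rot_upd :: "(nat \<Rightarrow> nat) \<Rightarrow> nat list \<Rightarrow> nat \<Rightarrow> nat" where
  "rot_upd pi idx =
     (fold (\<lambda>x f. f(idx ! Suc x := pi (idx ! x))) [0..<length idx - 1] pi)
       (hd idx := pi (last idx))"

definition gstep :: "nat \<Rightarrow> nat list \<Rightarrow> (nat \<Rightarrow> nat \<Rightarrow> nat) \<Rightarrow> (nat \<Rightarrow> nat) \<Rightarrow> nat \<times> nat
                      \<Rightarrow> nat \<Rightarrow> nat" where
  "gstep n lam T pi b = (case b of (j, i) \<Rightarrow>
     (if T (j - 1) i = T j i then pi
      else rot_upd pi (i # chain pi n (col_len lam j) (T j i) i n)))"

definition greedy_boxes :: "nat list \<Rightarrow> (nat \<times> nat) list" where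
  "greedy_boxes lam = concat (map (\<lambda>j. map (\<lambda>i. (j, i)) (rev [1..<col_len lam j + 1]))
                                  [2..<lam1 lam + 1])"

definition piT :: "nat \<Rightarrow> nat list \<Rightarrow> (nat \<Rightarrow> nat \<Rightarrow> nat) \<Rightarrow> nat \<Rightarrow> nat" where
  "piT n lam T = fold (\<lambda>b pi. gstep n lam T pi b) (greedy_boxes lam) (pi11 n lam T)"

end

theory Submission
  imports Defs
begin

text \<open>Both sides are computed by the same operation, sweeping a column, read bottom-up, by
  the columns to its right in turn. Scanning: the EWIS paths starting in column \<open>j\<close>, taken from
  the bottom up, use the boxes of each later column exactly as a single sweep of all their current
  values by that column would, so the paths can be advanced column by column and column \<open>j\<close> of
  \<open>S(T)\<close> is column \<open>j\<close> of \<open>T\<close> swept by columns \<open>j + 1, \<dots>, \<lambda>\<^sub>1\<close>. Greedy procedure: each step is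
  a cyclic shift along a chain, and on the first \<open>c\<^sub>k\<close> positions (\<open>k < j\<close>) it trades the largest
  value \<open>\<le> T(j,i)\<close> for \<open>T(j,i)\<close>. Sweeping by column \<open>j\<close> effects exactly these greedy trades, so
  by induction over the columns \<open>\<pi>\<^sub>T\<close> maps \<open>{1..c\<^sub>j}\<close> onto the entries of column \<open>j\<close> of
  \<open>S(T)\<close>, which is \<open>Y\<^sub>\<lambda>(\<pi>\<^sub>T) = S(T)\<close>.\<close>

section \<open>The scanning tableau as iterated column sweeps\<close>

text \<open>One scanning path through the columns \<open>ls\<close>, starting from the value \<open>v\<close>;
  \<open>h l\<close> is the lowest remaining row of column \<open>l\<close>.\<close>

fun scan_walk :: "(nat \<Rightarrow> nat \<Rightarrow> nat) \<Rightarrow> (nat \<Rightarrow> nat) \<Rightarrow> nat \<Rightarrow> nat list \<Rightarrow> (nat \<Rightarrow> nat) \<times> nat"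
where
  "scan_walk T h v [] = (h, v)"
| "scan_walk T h v (l # ls) =
     (if 1 \<le> h l \<and> v \<le> T l (h l)
      then scan_walk T (h(l := h l - 1)) (T l (h l)) ls else scan_walk T h v ls)"

fun scan_walks :: "(nat \<Rightarrow> nat \<Rightarrow> nat) \<Rightarrow> (nat \<Rightarrow> nat) \<Rightarrow> nat list \<Rightarrow> nat list \<Rightarrow> nat list" where
  "scan_walks T h [] ls = []"
| "scan_walks T h (x # xs) ls = (case scan_walk T h x ls of (h', v) \<Rightarrow> v # scan_walks T h' xs ls)"

fun scan_walk_heights :: "(nat \<Rightarrow> nat \<Rightarrow> nat) \<Rightarrow> (nat \<Rightarrow> nat) \<Rightarrow> nat list \<Rightarrow> nat list \<Rightarrow> nat \<Rightarrow> nat"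
where
  "scan_walk_heights T h [] ls = h"
| "scan_walk_heights T h (x # xs) ls = scan_walk_heights T (fst (scan_walk T h x ls)) xs ls"

text \<open>The effect of column \<open>l\<close>, with rows \<open>1..k\<close> still present, on the successive scanning
  paths carrying the values \<open>xs\<close>.\<close>

fun col_sweep :: "(nat \<Rightarrow> nat \<Rightarrow> nat) \<Rightarrow> nat \<Rightarrow> nat \<Rightarrow> nat list \<Rightarrow> nat list" where
  "col_sweep T l k [] = []"
| "col_sweep T l k (x # xs) =
     (if 1 \<le> k \<and> x \<le> T l k then T l k # col_sweep T l (k - 1) xs else x # col_sweep T l k xs)"

lemma fst_scan_walk_notin: "l \<notin> set ls \<Longrightarrow> fst (scan_walk T h v ls) l = h l"
  by (induction T h v ls rule: scan_walk.induct) auto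

lemma scan_walk_fun_upd_notin:
  "l \<notin> set ls \<Longrightarrow>
   scan_walk T (h(l := a)) v ls = ((fst (scan_walk T h v ls))(l := a), snd (scan_walk T h v ls))"
proof (induction T h v ls rule: scan_walk.induct)
  case (1 T h v)
  then show ?case by simp
next
  case (2 T h v l' ls)
  then have "l \<noteq> l'" and nl: "l \<notin> set ls" by auto
  then have swap: "(h(l := a))(l' := h l' - 1) = (h(l' := h l' - 1))(l := a)"
    and same: "(h(l := a)) l' = h l'" by (auto simp: fun_eq_iff)
  show ?case
  proof (cases "1 \<le> h l' \<and> v \<le> T l' (h l')")
    case True
    then show ?thesis using 2(1)[OF True nl] by (simp only: scan_walk.simps same swap simp_thms if_True)
  next
    case False
    then show ?thesis using 2(2)[OF False nl] by (simp only: scan_walk.simps same if_False)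
  qed
qed

lemma scan_walks_fun_upd_notin: "l \<notin> set ls \<Longrightarrow> scan_walks T (h(l := a)) xs ls = scan_walks T h xs ls"
proof (induction xs arbitrary: h)
  case (Cons x xs)
  obtain h' v where "scan_walk T h x ls = (h', v)" by fastforce
  then show ?case
    using scan_walk_fun_upd_notin[OF Cons.prems, of T h a x] Cons.IH[OF Cons.prems, of h']
    by (simp del: fun_upd_apply)
qed simp

text \<open>The key commutation: the paths may be advanced column by column instead of path by
  path.\<close>

lemma scan_walks_Cons_col:
  assumes "l \<notin> set ls"
  shows "scan_walks T h xs (l # ls) = scan_walks T h (col_sweep T l (h l) xs) ls"
  using assms
proof (induction xs arbitrary: h)
  case Nil
  then show ?case by simp
next
  case (Cons x xs)
  show ?case
  proof (cases "1 \<le> h l \<and> x \<le> T l (h l)")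
    case True
    obtain h1 v where walk1: "scan_walk T (h(l := h l - 1)) (T l (h l)) ls = (h1, v)"
      by fastforce
    obtain h2 v2 where walk2: "scan_walk T h (T l (h l)) ls = (h2, v2)"
      by fastforce
    have h1: "h1 = h2(l := h l - 1)" "v = v2"
      using scan_walk_fun_upd_notin[OF Cons.prems, of T h "h l - 1" "T l (h l)"] walk1 walk2
      by auto
    have "h1 l = h l - 1"
      using fst_scan_walk_notin[OF Cons.prems, of T "h(l := h l - 1)"] walk1
      by (metis fst_conv fun_upd_same)
    then have "scan_walks T h (x # xs) (l # ls) = v # scan_walks T h1 (col_sweep T l (h l - 1) xs) ls"
      using True walk1 Cons.IH[OF Cons.prems, of h1] by simp
    also have "\<dots> = v2 # scan_walks T h2 (col_sweep T l (h l - 1) xs) ls"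
      using h1 scan_walks_fun_upd_notin[OF Cons.prems] by simp
    also have "\<dots> = scan_walks T h (col_sweep T l (h l) (x # xs)) ls"
      using True walk2 by simp
    finally show ?thesis .
  next
    case False
    obtain h1 v where walk: "scan_walk T h x ls = (h1, v)" by fastforce
    have "h1 l = h l" using fst_scan_walk_notin[OF Cons.prems, of T h x] walk by simp
    moreover have "scan_walk T h x (l # ls) = (h1, v)"
      and "col_sweep T l (h l) (x # xs) = x # col_sweep T l (h l) xs"
      using False walk by auto
    ultimately show ?thesis using Cons.IH[OF Cons.prems, of h1] walk
      by (simp del: scan_walk.simps col_sweep.simps)
  qed
qed

lemma scan_walks_eq_fold_col_sweep:
  "distinct ls \<Longrightarrow> scan_walks T h xs ls = fold (\<lambda>l xs. col_sweep T l (h l) xs) ls xs"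
proof (induction ls arbitrary: xs)
  case Nil
  have "scan_walks T h xs [] = xs" by (induction xs) auto
  then show ?case by simp
next
  case (Cons l ls)
  then show ?case using scan_walks_Cons_col[of l ls T h xs] by simp
qed

lemma scan_walk_heights_snoc:
  "scan_walk_heights T h (xs @ [x]) ls = fst (scan_walk T (scan_walk_heights T h xs ls) x ls)"
  by (induction xs arbitrary: h) auto

lemma nth_scan_walks:
  "m < length xs \<Longrightarrow>
   scan_walks T h xs ls ! m = snd (scan_walk T (scan_walk_heights T h (take m xs) ls) (xs ! m) ls)"
proof (induction xs arbitrary: h m)
  case (Cons x xs)
  obtain h1 v where "scan_walk T h x ls = (h1, v)" by fastforce
  with Cons show ?case by (cases m) auto
qed simp

fun low_path :: "nat list \<Rightarrow> (nat \<Rightarrow> nat \<Rightarrow> nat) \<Rightarrow> (nat \<times> nat) set \<Rightarrow> nat \<Rightarrow> nat list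
                   \<Rightarrow> (nat \<times> nat) list" where
  "low_path lam T D v [] = []"
| "low_path lam T D v (l # ls) =
     (if rem_rows lam D l \<noteq> {} \<and> v \<le> T l (Max (rem_rows lam D l))
      then (l, Max (rem_rows lam D l)) # low_path lam T D (T l (Max (rem_rows lam D l))) ls
      else low_path lam T D v ls)"

lemma ewis_eq_low_path:
  "ewis (dropWhile (\<lambda>y. snd y < v)
     (concat (map (\<lambda>l. if rem_rows lam D l = {} then []
                       else [((l, Max (rem_rows lam D l)), T l (Max (rem_rows lam D l)))]) ls)))
   = map (\<lambda>b. (b, T (fst b) (snd b))) (low_path lam T D v ls)"
  by (induction ls arbitrary: v) auto

lemma rem_rows_empty: "rem_rows lam {} l = {1..col_len lam l}"
  by (auto simp: rem_rows_def)

lemma low_path_cols: "b \<in> set (low_path lam T D v ls) \<Longrightarrow> fst b \<in> set ls"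
  by (induction lam T D v ls rule: low_path.induct) (auto split: if_splits)

lemma low_path_scan_walk:
  assumes "distinct ls" and "\<forall>l\<in>set ls. rem_rows lam D l = {1..h l}"
  shows "(\<forall>l\<in>set ls. rem_rows lam (D \<union> set (low_path lam T D v ls)) l
                      = {1..fst (scan_walk T h v ls) l})
     \<and> snd (scan_walk T h v ls) = (if low_path lam T D v ls = [] then v
         else T (fst (last (low_path lam T D v ls))) (snd (last (low_path lam T D v ls))))"
  using assms
proof (induction ls arbitrary: h v)
  case Nil
  then show ?case by simp
next
  case (Cons l ls)
  have l: "l \<notin> set ls" and ls: "distinct ls" using Cons.prems(1) by auto
  have rows_l: "rem_rows lam D l = {1..h l}" using Cons.prems(2) by simp
  have max_l: "Max (rem_rows lam D l) = h l" if "1 \<le> h l"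
    unfolding rows_l using that by (intro Max_eqI) auto
  have untouched: "rem_rows lam (D \<union> set (low_path lam T D w ls)) l = rem_rows lam D l" for w
    using low_path_cols l by (fastforce simp: rem_rows_def)
  show ?case
  proof (cases "1 \<le> h l \<and> v \<le> T l (h l)")
    case True
    define h' where "h' = h(l := h l - 1)"
    have path: "low_path lam T D v (l # ls) = (l, h l) # low_path lam T D (T l (h l)) ls"
      using True rows_l max_l by simp
    have walk: "scan_walk T h v (l # ls) = scan_walk T h' (T l (h l)) ls"
      using True by (simp add: h'_def)
    have "\<forall>l'\<in>set ls. rem_rows lam D l' = {1..h' l'}"
      using Cons.prems(2) l by (auto simp: h'_def)
    note IH = Cons.IH[OF ls this, of "T l (h l)"]
    have "rem_rows lam (D \<union> set (low_path lam T D v (l # ls))) l = {1..h l} - {h l}"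
      unfolding path using untouched[of "T l (h l)"] rows_l by (auto simp: rem_rows_def)
    also have "\<dots> = {1..fst (scan_walk T h' (T l (h l)) ls) l}"
      using fst_scan_walk_notin[OF l] by (auto simp: h'_def)
    finally have "rem_rows lam (D \<union> set (low_path lam T D v (l # ls))) l
        = {1..fst (scan_walk T h v (l # ls)) l}" unfolding walk .
    moreover have "rem_rows lam (D \<union> set (low_path lam T D v (l # ls))) l'
        = rem_rows lam (D \<union> set (low_path lam T D (T l (h l)) ls)) l'" if "l' \<in> set ls" for l'
      using that l unfolding path by (auto simp: rem_rows_def)
    ultimately show ?thesis using IH unfolding path walk by auto
  next
    case False
    have path: "low_path lam T D v (l # ls) = low_path lam T D v ls"
      using False rows_l max_l by auto
    have walk: "scan_walk T h v (l # ls) = scan_walk T h v ls"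
      using False by auto
    have "\<forall>l'\<in>set ls. rem_rows lam D l' = {1..h l'}" using Cons.prems(2) by simp
    note IH = Cons.IH[OF ls this, of v]
    show ?thesis
      using IH untouched[of v] rows_l fst_scan_walk_notin[OF l] unfolding path walk by auto
  qed
qed

definition col_desc :: "(nat \<Rightarrow> nat \<Rightarrow> nat) \<Rightarrow> nat \<Rightarrow> nat \<Rightarrow> nat list" where
  "col_desc T l k = map (T l) (rev [1..<k + 1])"

lemma col_desc_0 [simp]: "col_desc T l 0 = []"
  by (simp add: col_desc_def)

lemma col_desc_Suc: "col_desc T l (Suc k) = T l (Suc k) # col_desc T l k"
  by (simp add: col_desc_def)

lemma set_col_desc: "set (col_desc T l k) = T l ` {1..k}"
  by (auto simp: col_desc_def)

lemma length_col_desc [simp]: "length (col_desc T l k) = k"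
  by (simp add: col_desc_def)

lemma nth_col_desc: "m < k \<Longrightarrow> col_desc T l k ! m = T l (k - m)"
  unfolding col_desc_def by (simp add: rev_nth Suc_diff_Suc del: upt_Suc)

definition sweep :: "nat list \<Rightarrow> (nat \<Rightarrow> nat \<Rightarrow> nat) \<Rightarrow> nat \<Rightarrow> nat \<Rightarrow> nat list" where
  "sweep lam T j l = fold (\<lambda>l' xs. col_sweep T l' (col_len lam l') xs) [Suc j..<l + 1]
                       (col_desc T j (col_len lam j))"

lemma scan_path_eq_low_path:
  assumes "j \<le> lam1 lam" and "rem_rows lam D j = {1..k}" and "1 \<le> k"
  shows "scan_path lam T j D = (j, k) # low_path lam T D (T j k) [Suc j..<lam1 lam + 1]"
proof -
  have "Max (rem_rows lam D j) = k" using assms(2,3) by (intro Max_eqI) auto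
  moreover have "[j..<lam1 lam + 1] = j # [Suc j..<lam1 lam + 1]"
    using assms(1) by (simp add: upt_conv_Cons)
  ultimately show ?thesis
    using assms(2,3) ewis_eq_low_path[of "T j k" lam D T]
    by (simp add: scan_path_def low_seq_def comp_def)
qed

lemma rem_rows_scan_del:
  assumes "j \<le> lam1 lam" and "m \<le> col_len lam j"
  shows "(\<forall>l \<in> set [Suc j..<lam1 lam + 1]. rem_rows lam (scan_del lam T j m) l
            = {1..scan_walk_heights T (col_len lam) (take m (col_desc T j (col_len lam j)))
                   [Suc j..<lam1 lam + 1] l})
     \<and> rem_rows lam (scan_del lam T j m) j = {1..col_len lam j - m}"
  using assms(2)
proof (induction m)
  case 0
  then show ?case by (simp add: rem_rows_empty)
next
  case (Suc m)
  define c where "c = col_len lam j"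
  define ls where "ls = [Suc j..<lam1 lam + 1]"
  define D where "D = scan_del lam T j m"
  define P where "P = low_path lam T D (T j (c - m)) ls"
  have m: "m < c" using Suc.prems by (simp add: c_def)
  have IH: "\<forall>l \<in> set ls. rem_rows lam D l
              = {1..scan_walk_heights T (col_len lam) (take m (col_desc T j c)) ls l}"
    "rem_rows lam D j = {1..c - m}"
    using Suc by (auto simp: D_def c_def ls_def)
  have j: "j \<notin> set ls" and ls: "distinct ls" by (simp_all add: ls_def)
  have "scan_path lam T j D = (j, c - m) # P"
    unfolding P_def ls_def using scan_path_eq_low_path[OF assms(1) IH(2)] m by simp
  then have del: "scan_del lam T j (Suc m) = D \<union> set ((j, c - m) # P)" by (simp add: D_def)
  have take: "take (Suc m) (col_desc T j c) = take m (col_desc T j c) @ [T j (c - m)]"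
    using m by (simp add: take_Suc_conv_app_nth nth_col_desc)
  have "rem_rows lam (scan_del lam T j (Suc m)) l = rem_rows lam (D \<union> set P) l"
    if "l \<in> set ls" for l
    using that j unfolding del by (auto simp: rem_rows_def)
  then have cols: "\<forall>l \<in> set ls. rem_rows lam (scan_del lam T j (Suc m)) l
      = {1..scan_walk_heights T (col_len lam) (take (Suc m) (col_desc T j c)) ls l}"
    using low_path_scan_walk[OF ls IH(1), of T "T j (c - m)"]
    unfolding take scan_walk_heights_snoc P_def by simp
  have "rem_rows lam (scan_del lam T j (Suc m)) j = {1..c - m} - {c - m}"
    using IH(2) j low_path_cols[of _ lam T D _ ls] unfolding del P_def
    by (fastforce simp: rem_rows_def)
  also have "\<dots> = {1..c - Suc m}" by auto
  finally show ?case using cols by (simp add: c_def ls_def)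
qed

theorem scanS_eq_sweep:
  assumes "j \<le> lam1 lam" and "1 \<le> i" and "i \<le> col_len lam j"
  shows "scanS lam T j i = sweep lam T j (lam1 lam) ! (col_len lam j - i)"
proof -
  define c where "c = col_len lam j"
  define ls where "ls = [Suc j..<lam1 lam + 1]"
  define xs where "xs = col_desc T j c"
  define m where "m = c - i"
  define D where "D = scan_del lam T j m"
  define h where "h = scan_walk_heights T (col_len lam) (take m xs) ls"
  have m: "m < c" "c - m = i" using assms(2,3) by (auto simp: m_def c_def)
  have rows: "\<forall>l \<in> set ls. rem_rows lam D l = {1..h l}" "rem_rows lam D j = {1..i}"
    using rem_rows_scan_del[OF assms(1), of m T] m
    by (auto simp: D_def ls_def xs_def c_def h_def)
  have "scanP lam T j i = (j, i) # low_path lam T D (T j i) ls"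
    using scan_path_eq_low_path[OF assms(1) rows(2) assms(2)]
    by (simp add: scanP_def D_def m_def c_def ls_def)
  then have "scanS lam T j i = snd (scan_walk T h (T j i) ls)"
    using low_path_scan_walk[OF _ rows(1), of T "T j i"]
    by (auto simp: scanS_def ls_def split: prod.splits)
  also have "\<dots> = scan_walks T (col_len lam) xs ls ! m"
    using m by (simp add: nth_scan_walks h_def xs_def nth_col_desc)
  also have "\<dots> = sweep lam T j (lam1 lam) ! (c - i)"
    by (simp add: scan_walks_eq_fold_col_sweep ls_def xs_def sweep_def c_def m_def)
  finally show ?thesis by (simp add: c_def)
qed


section \<open>Column sweeps as greedy removals\<close>

text \<open>\<open>greedy_removable\<close> guarantees that no removal hits the junk value \<open>Max {}\<close>.\<close>

fun greedy_remove :: "nat set \<Rightarrow> nat list \<Rightarrow> nat set" where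
  "greedy_remove R [] = R"
| "greedy_remove R (b # bs) = greedy_remove (R - {Max {a\<in>R. a \<le> b}}) bs"

fun greedy_removable :: "nat set \<Rightarrow> nat list \<Rightarrow> bool" where
  "greedy_removable R [] = True"
| "greedy_removable R (b # bs) =
     ((\<exists>a\<in>R. a \<le> b) \<and> greedy_removable (R - {Max {a\<in>R. a \<le> b}}) bs)"

lemma greedy_remove_append: "greedy_remove R (xs @ ys) = greedy_remove (greedy_remove R xs) ys"
  by (induction R xs rule: greedy_remove.induct) auto

lemma greedy_removable_append:
  "greedy_removable R (xs @ ys) \<longleftrightarrow> greedy_removable R xs \<and> greedy_removable (greedy_remove R xs) ys"
  by (induction R xs rule: greedy_remove.induct) auto

lemma greedy_removable_insert_greater:
  assumes "\<forall>b\<in>set bs. b < x" and "x \<notin> R" and "finite R"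
  shows "greedy_removable (insert x R) bs = greedy_removable R bs"
  using assms
proof (induction bs arbitrary: R)
  case (Cons b bs)
  have b: "b < x" using Cons.prems by simp
  then have below: "{a\<in>insert x R. a \<le> b} = {a\<in>R. a \<le> b}" by auto
  show ?case
  proof (cases "\<exists>a\<in>R. a \<le> b")
    case True
    then have "Max {a\<in>R. a \<le> b} \<in> {a\<in>R. a \<le> b}" using Cons.prems by (intro Max_in) auto
    then have "Max {a\<in>R. a \<le> b} \<noteq> x" using b by auto
    then show ?thesis
      using Cons.IH[of "R - {Max {a\<in>R. a \<le> b}}"] Cons.prems below by (auto simp: insert_Diff_if)
  qed (use below in auto)
qed simp

lemma greedy_remove_insert_greater:
  assumes "\<forall>b\<in>set bs. b < x" and "x \<notin> R" and "finite R" and "greedy_removable R bs"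
  shows "greedy_remove (insert x R) bs = insert x (greedy_remove R bs)"
  using assms
proof (induction bs arbitrary: R)
  case (Cons b bs)
  have b: "b < x" using Cons.prems by simp
  then have below: "{a\<in>insert x R. a \<le> b} = {a\<in>R. a \<le> b}" by auto
  have "Max {a\<in>R. a \<le> b} \<in> {a\<in>R. a \<le> b}" using Cons.prems by (intro Max_in) auto
  then have "Max {a\<in>R. a \<le> b} \<noteq> x" using b by auto
  then show ?case
    using Cons.IH[of "R - {Max {a\<in>R. a \<le> b}}"] Cons.prems below by (auto simp: insert_Diff_if)
qed simp

lemma set_col_sweep_subset: "set (col_sweep T l k xs) \<subseteq> set xs \<union> T l ` {1..k}"
proof (induction xs arbitrary: k)
  case (Cons x xs)
  have "T l ` {1..k - 1} \<subseteq> T l ` {1..k}" by auto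
  then show ?case using Cons.IH[of k] Cons.IH[of "k - 1"] by auto blast
qed simp

lemma length_col_sweep [simp]: "length (col_sweep T l k xs) = length xs"
  by (induction T l k xs rule: col_sweep.induct) auto

lemma set_col_sweep:
  assumes "sorted_wrt (>) xs" and "strict_mono_on {1..k} (T l)"
    and "greedy_removable (set xs) (col_desc T l k)"
  shows "set (col_sweep T l k xs) = set (col_desc T l k) \<union> greedy_remove (set xs) (col_desc T l k)
    \<and> sorted_wrt (>) (col_sweep T l k xs)"
  using assms
proof (induction xs arbitrary: k)
  case Nil
  then have "k = 0" by (cases k) (auto simp: col_desc_Suc)
  then show ?case by simp
next
  case (Cons x xs)
  have xs: "sorted_wrt (>) xs" and below_x: "\<forall>y\<in>set xs. y < x" using Cons.prems(1) by auto
  then have x: "x \<notin> set xs" by auto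
  have mono: "T l a < T l b" if "1 \<le> a" "a < b" "b \<le> k" for a b
    using that strict_mono_onD[OF Cons.prems(2)] by simp
  show ?case
  proof (cases "1 \<le> k \<and> x \<le> T l k")
    case True
    obtain k' where k: "k = Suc k'" using True by (cases k) auto
    have desc: "col_desc T l k = T l k # col_desc T l k'" unfolding k by (rule col_desc_Suc)
    have "Max {a\<in>set (x # xs). a \<le> T l k} = x" using True below_x by (intro Max_eqI) auto
    moreover have "set (x # xs) - {x} = set xs" using x by auto
    ultimately have removed:
      "greedy_remove (set (x # xs)) (col_desc T l k) = greedy_remove (set xs) (col_desc T l k')"
      and "greedy_removable (set xs) (col_desc T l k')"
      using Cons.prems(3) unfolding desc by simp_all
    moreover have "strict_mono_on {1..k'} (T l)"
      using Cons.prems(2) by (rule monotone_on_subset) (auto simp: k)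
    ultimately have IH: "set (col_sweep T l k' xs)
        = set (col_desc T l k') \<union> greedy_remove (set xs) (col_desc T l k')
      \<and> sorted_wrt (>) (col_sweep T l k' xs)"
      using Cons.IH[OF xs] by blast
    have "y < T l k" if "y \<in> set (col_sweep T l k' xs)" for y
      using set_col_sweep_subset[of T l k' xs] that below_x True mono[of _ k] k
      by fastforce
    then show ?thesis using True k IH removed desc by auto
  next
    case False
    show ?thesis
    proof (cases "k = 0")
      case True
      have "col_sweep T l 0 ys = ys" for ys by (induction ys) auto
      then show ?thesis using Cons.prems(1) True by simp
    next
      case k: False
      then have greater: "\<forall>b\<in>set (col_desc T l k). b < x"
        using False mono[of _ k] by (fastforce simp: set_col_desc)
      then have removable: "greedy_removable (set xs) (col_desc T l k)"
        using Cons.prems(3) greedy_removable_insert_greater[OF _ x] by simp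
      note IH = Cons.IH[OF xs Cons.prems(2) removable]
      have "y < x" if "y \<in> set (col_sweep T l k xs)" for y
        using set_col_sweep_subset[of T l k xs] that below_x greater
        by (auto simp: set_col_desc)
      then show ?thesis
        using False IH greedy_remove_insert_greater[OF greater x _ removable]
        by auto
    qed
  qed
qed


section \<open>One step of the greedy procedure\<close>

lemma fold_shift_upd:
  fixes pi :: "nat \<Rightarrow> nat"
  assumes "distinct idx" and "m < length idx"
  defines "F \<equiv> fold (\<lambda>x f. f(idx ! Suc x := pi (idx ! x))) [0..<m] pi"
  shows "(\<forall>x<m. F (idx ! Suc x) = pi (idx ! x)) \<and> (\<forall>p. (\<forall>x<m. p \<noteq> idx ! Suc x) \<longrightarrow> F p = pi p)"
  using assms(2) unfolding F_def
proof (induction m)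
  case (Suc m)
  have "idx ! Suc x \<noteq> idx ! Suc m" if "x < m" for x
    using that Suc.prems assms(1) by (simp add: nth_eq_iff_index_eq)
  then show ?case using Suc by (auto simp: less_Suc_eq)
qed simp

lemma rot_upd_hd: "rot_upd pi (a # qs) a = pi (last (a # qs))"
  by (simp add: rot_upd_def)

lemma rot_upd_nth:
  assumes "distinct (a # qs)" and "x < length qs"
  shows "rot_upd pi (a # qs) (qs ! x) = pi ((a # qs) ! x)"
proof -
  have "qs ! x \<noteq> a" using assms by (metis distinct.simps(2) nth_mem)
  then show ?thesis
    using fold_shift_upd[OF assms(1), of "length qs" pi] assms(2) by (simp add: rot_upd_def)
qed

lemma rot_upd_other:
  assumes "distinct (a # qs)" and "p \<notin> set (a # qs)"
  shows "rot_upd pi (a # qs) p = pi p"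
proof -
  have "\<forall>x<length qs. p \<noteq> (a # qs) ! Suc x" using assms(2) by auto
  then show ?thesis
    using fold_shift_upd[OF assms(1), of "length qs" pi] assms(2) by (simp add: rot_upd_def)
qed

lemma rot_upd_image_prefix:
  fixes pi :: "nat \<Rightarrow> nat"
  assumes inj: "inj_on pi {1..n}" and ids: "distinct ids" "set ids \<subseteq> {1..n}" "ids \<noteq> []"
    and k: "k < length ids" "\<forall>x < length ids. ids ! x \<le> w \<longleftrightarrow> x \<le> k" and w: "w \<le> n"
  shows "rot_upd pi ids ` {1..w} = (pi ` {1..w} - {pi (ids ! k)}) \<union> {pi (last ids)}"
proof -
  obtain a qs where a: "ids = a # qs" using ids(3) by (cases ids) auto
  define pi' where "pi' = rot_upd pi ids"
  have head: "pi' a = pi (last ids)" by (simp add: pi'_def a rot_upd_hd)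
  have shift: "pi' (ids ! Suc x) = pi (ids ! x)" if "Suc x < length ids" for x
    using rot_upd_nth[OF ids(1)[unfolded a], of x pi] that by (simp add: pi'_def a)
  have fixed: "pi' p = pi p" if "p \<notin> set ids" for p
    using rot_upd_other[OF ids(1)[unfolded a]] that by (simp add: pi'_def a)
  have nth_in: "ids ! x \<in> {1..n}" if "x < length ids" for x using ids(2) nth_mem[OF that] by blast
  have ne_k: "pi (ids ! x) \<noteq> pi (ids ! k)" if "x < length ids" "x \<noteq> k" for x
    using inj_on_contraD[OF inj _ nth_in nth_in] ids(1) k(1) that by (simp add: nth_eq_iff_index_eq)
  have into: "pi' p \<in> (pi ` {1..w} - {pi (ids ! k)}) \<union> {pi (last ids)}" if p: "p \<in> {1..w}" for p
  proof (cases "p \<in> set ids")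
    case True
    then obtain x where x: "x < length ids" "p = ids ! x" by (auto simp: in_set_conv_nth)
    show ?thesis
    proof (cases x)
      case 0
      then show ?thesis using x head by (simp add: a)
    next
      case (Suc x')
      then have "x' < k" using k(2) x p by auto
      then have "ids ! x' \<in> {1..w}" using k nth_in[of x'] by auto
      then show ?thesis using shift[of x'] x Suc ne_k[of x'] \<open>x' < k\<close> k(1) by auto
    qed
  next
    case False
    have "p \<noteq> ids ! k" using False k(1) by auto
    then have "pi p \<noteq> pi (ids ! k)" using inj_on_contraD[OF inj _ _ nth_in[OF k(1)]] p w by auto
    then show ?thesis using fixed[OF False] p by auto
  qed
  moreover have onto: "v \<in> pi' ` {1..w}" if v: "v \<in> (pi ` {1..w} - {pi (ids ! k)}) \<union> {pi (last ids)}" for v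
  proof (cases "v = pi (last ids)")
    case True
    have "a \<in> {1..w}" using k(2) nth_in[of 0] by (auto simp: a)
    then show ?thesis using head True by (auto intro: rev_image_eqI)
  next
    case False
    then obtain p where p: "p \<in> {1..w}" "v = pi p" "v \<noteq> pi (ids ! k)" using v by auto
    show ?thesis
    proof (cases "p \<in> set ids")
      case True
      then obtain x where x: "x < length ids" "p = ids ! x" by (auto simp: in_set_conv_nth)
      then have "x < k" using p k(2) by (cases "x = k") auto
      then have "Suc x < length ids" "ids ! Suc x \<in> {1..w}" using k nth_in[of "Suc x"] by auto
      then show ?thesis using shift x p by (auto intro: rev_image_eqI)
    next
      case False
      then show ?thesis using fixed p by (auto intro: rev_image_eqI)
    qed
  qed
  ultimately show ?thesis
    unfolding pi'_def[symmetric] by (intro equalityI image_subsetI subsetI into onto)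
qed

definition chain_cands :: "(nat \<Rightarrow> nat) \<Rightarrow> nat \<Rightarrow> nat \<Rightarrow> nat \<Rightarrow> nat \<Rightarrow> nat set" where
  "chain_cands pi n c t p = {q. c < q \<and> q \<le> n \<and> pi p < pi q \<and> pi q \<le> t}"

lemma finite_chain_cands: "finite (chain_cands pi n c t p)"
  by (rule finite_subset[of _ "{..n}"]) (auto simp: chain_cands_def)

lemma chain_Suc:
  assumes "pi p \<noteq> t" and "\<exists>q. c < q \<and> q \<le> n \<and> pi p < pi q \<and> pi q \<le> t"
  defines "q \<equiv> LEAST q. c < q \<and> q \<le> n \<and> pi p < pi q \<and> pi q \<le> t"
  shows "chain pi n c t p (Suc f) = q # chain pi n c t q f"
    and "c < q" "q \<le> n" "pi p < pi q" "pi q \<le> t"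
    and "\<And>r. c < r \<Longrightarrow> r < q \<Longrightarrow> \<not> (pi p < pi r \<and> pi r \<le> t)"
    and "card (chain_cands pi n c t q) < card (chain_cands pi n c t p)"
proof -
  show "chain pi n c t p (Suc f) = q # chain pi n c t q f"
    using assms(1,2) unfolding q_def by (simp add: Let_def)
  have q: "c < q \<and> q \<le> n \<and> pi p < pi q \<and> pi q \<le> t"
    unfolding q_def using assms(2) by (rule LeastI_ex)
  then show "c < q" "q \<le> n" "pi p < pi q" "pi q \<le> t" by auto
  show "\<not> (pi p < pi r \<and> pi r \<le> t)" if "c < r" "r < q" for r
    using that q Least_le[of "\<lambda>q. c < q \<and> q \<le> n \<and> pi p < pi q \<and> pi q \<le> t" r]
    unfolding q_def[symmetric] by fastforce
  have "chain_cands pi n c t q \<subset> chain_cands pi n c t p"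
    using q by (auto simp: chain_cands_def)
  then show "card (chain_cands pi n c t q) < card (chain_cands pi n c t p)"
    by (rule psubset_card_mono[OF finite_chain_cands])
qed

lemma chain_bounds:
  "(\<forall>q\<in>set (chain pi n c t p f). c < q \<and> q \<le> n \<and> pi q \<le> t)
   \<and> sorted_wrt (<) (map pi (p # chain pi n c t p f))"
proof (induction f arbitrary: p)
  case (Suc f)
  show ?case
  proof (cases "pi p \<noteq> t \<and> (\<exists>q. c < q \<and> q \<le> n \<and> pi p < pi q \<and> pi q \<le> t)")
    case True
    define q where "q = (LEAST q. c < q \<and> q \<le> n \<and> pi p < pi q \<and> pi q \<le> t)"
    note step = chain_Suc[of pi p t c n, folded q_def]
    show ?thesis using True Suc[of q] step(1-5) by (fastforce intro: order.strict_trans)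
  qed auto
qed simp

lemma last_chain:
  assumes "card (chain_cands pi n c t p) \<le> f" and "pi p \<le> t"
    and "pi p = t \<or> (\<exists>q. c < q \<and> q \<le> n \<and> pi q = t)"
  shows "pi (last (p # chain pi n c t p f)) = t"
  using assms
proof (induction f arbitrary: p)
  case 0
  show ?case
  proof (cases "pi p = t")
    case False
    then obtain q where "c < q" "q \<le> n" "pi q = t" using 0 by auto
    then have "q \<in> chain_cands pi n c t p" using 0 False by (auto simp: chain_cands_def)
    then show ?thesis using 0 finite_chain_cands[of pi n c t p] by (auto simp: card_gt_0_iff)
  qed simp
next
  case (Suc f)
  show ?case
  proof (cases "pi p = t")
    case False
    then have ex: "\<exists>q. c < q \<and> q \<le> n \<and> pi p < pi q \<and> pi q \<le> t"
      using Suc.prems by force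
    define q where "q = (LEAST q. c < q \<and> q \<le> n \<and> pi p < pi q \<and> pi q \<le> t)"
    note step = chain_Suc[OF False ex, folded q_def]
    show ?thesis using Suc.IH[of q] step Suc.prems False by simp
  qed simp
qed

lemma chain_beyond:
  assumes "\<forall>r. c < r \<and> r \<le> w \<longrightarrow> \<not> (pi p < pi r \<and> pi r \<le> t)"
  shows "\<forall>q\<in>set (chain pi n c t p f). w < q"
  using assms
proof (induction f arbitrary: p)
  case (Suc f)
  show ?case
  proof (cases "pi p \<noteq> t \<and> (\<exists>q. c < q \<and> q \<le> n \<and> pi p < pi q \<and> pi q \<le> t)")
    case True
    define q where "q = (LEAST q. c < q \<and> q \<le> n \<and> pi p < pi q \<and> pi q \<le> t)"
    note step = chain_Suc[of pi p t c n, folded q_def]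
    have "w < q" using True Suc.prems step(2,4,5) by (meson not_le)
    moreover have "\<forall>r. c < r \<and> r \<le> w \<longrightarrow> \<not> (pi q < pi r \<and> pi r \<le> t)"
      using True Suc.prems step(4) by (meson order.strict_trans)
    ultimately show ?thesis using True Suc.IH[of q] step(1) by auto
  qed auto
qed simp

lemma chain_prefix:
  assumes "p \<le> w" and "w \<le> n" and "card (chain_cands pi n c t p) \<le> f" and "pi p \<le> t"
  defines "ids \<equiv> p # chain pi n c t p f"
  shows "\<exists>k < length ids. (\<forall>x < length ids. ids ! x \<le> w \<longleftrightarrow> x \<le> k)
     \<and> (\<forall>r. c < r \<and> r \<le> w \<and> pi r \<le> t \<longrightarrow> pi r \<le> pi (ids ! k)) \<and> pi (ids ! k) \<le> t"
  using assms(1-4) unfolding ids_def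
proof (induction f arbitrary: p)
  case 0
  then have "chain_cands pi n c t p = {}" using finite_chain_cands by auto
  then have "\<forall>r. c < r \<and> r \<le> w \<and> pi r \<le> t \<longrightarrow> pi r \<le> pi p"
    using 0 by (simp add: chain_cands_def) (meson le_trans not_le)
  then show ?case using 0 by (intro exI[of _ 0]) auto
next
  case (Suc f)
  show ?case
  proof (cases "pi p \<noteq> t \<and> (\<exists>q. c < q \<and> q \<le> n \<and> pi p < pi q \<and> pi q \<le> t)")
    case True
    define q where "q = (LEAST q. c < q \<and> q \<le> n \<and> pi p < pi q \<and> pi q \<le> t)"
    note step = chain_Suc[of pi p t c n, folded q_def]
    show ?thesis
    proof (cases "q \<le> w")
      case True
      then obtain k where k: "k < length (q # chain pi n c t q f)"
        "\<forall>x < length (q # chain pi n c t q f). (q # chain pi n c t q f) ! x \<le> w \<longleftrightarrow> x \<le> k"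
        "\<forall>r. c < r \<and> r \<le> w \<and> pi r \<le> t \<longrightarrow> pi r \<le> pi ((q # chain pi n c t q f) ! k)"
        "pi ((q # chain pi n c t q f) ! k) \<le> t"
        using Suc.IH[of q] Suc.prems step(5,7) \<open>pi p \<noteq> t \<and> _\<close> by fastforce
      have "\<forall>x < length (p # q # chain pi n c t q f).
          (p # q # chain pi n c t q f) ! x \<le> w \<longleftrightarrow> x \<le> Suc k"
        using k(2) Suc.prems(1) by (auto simp: nth_Cons split: nat.split)
      then show ?thesis using k \<open>pi p \<noteq> t \<and> _\<close> step(1)
        by (intro exI[of _ "Suc k"]) auto
    next
      case False
      have none: "\<forall>r. c < r \<and> r \<le> w \<longrightarrow> \<not> (pi p < pi r \<and> pi r \<le> t)"
        using step(6) True False by (meson le_less_trans not_le)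
      then have "\<forall>r. c < r \<and> r \<le> w \<longrightarrow> \<not> (pi q < pi r \<and> pi r \<le> t)"
        using True step(4) by (meson order.strict_trans)
      then have "\<forall>x\<in>set (chain pi n c t q f). w < x" by (rule chain_beyond)
      then have "\<forall>x < length (p # q # chain pi n c t q f).
          (p # q # chain pi n c t q f) ! x \<le> w \<longleftrightarrow> x = 0"
        using Suc.prems(1) False by (auto simp: nth_Cons not_le split: nat.split)
      then show ?thesis using True step(1) none Suc.prems
        by (intro exI[of _ 0]) (auto simp: not_le)
    qed
  next
    case False
    then have "chain pi n c t p (Suc f) = []" by auto
    moreover have "\<forall>r. c < r \<and> r \<le> w \<and> pi r \<le> t \<longrightarrow> pi r \<le> pi p"
      using False Suc.prems by (metis le_trans not_le)
    ultimately show ?thesis using Suc.prems by (intro exI[of _ 0]) auto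
  qed
qed

text \<open>The greedy step at box \<open>(j, i)\<close> when \<open>T(j-1,i) \<noteq> T(j,i)\<close>, with \<open>c = c\<^sub>j\<close> and
  \<open>t = T(j,i)\<close>.\<close>

definition rot_chain :: "(nat \<Rightarrow> nat) \<Rightarrow> nat \<Rightarrow> nat \<Rightarrow> nat \<Rightarrow> nat \<Rightarrow> nat \<Rightarrow> nat" where
  "rot_chain pi n c t i = rot_upd pi (i # chain pi n c t i n)"

context
  fixes pi :: "nat \<Rightarrow> nat" and n c t i :: nat
  assumes bij: "bij_betw pi {1..n} {1..n}"
    and i: "1 \<le> i" "i \<le> c" and c: "c \<le> n" and pi_i: "pi i \<le> t"
    and target: "pi i = t \<or> (\<exists>q. c < q \<and> q \<le> n \<and> pi q = t)"
begin

private lemma ids_bounds: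
  defines "ids \<equiv> i # chain pi n c t i n"
  shows "\<forall>q\<in>set (chain pi n c t i n). c < q \<and> q \<le> n" "distinct ids"
    "\<forall>p\<in>set ids. 1 \<le> p \<and> p \<le> n" "sorted_wrt (<) (map pi ids)"
proof -
  note bounds = chain_bounds[of pi n c t i n]
  then show "\<forall>q\<in>set (chain pi n c t i n). c < q \<and> q \<le> n" "sorted_wrt (<) (map pi ids)"
    by (auto simp: ids_def)
  then have "distinct (map pi ids)" using strict_sorted_iff by blast
  then show "distinct ids" by (simp add: distinct_map)
  show "\<forall>p\<in>set ids. 1 \<le> p \<and> p \<le> n" using bounds i c by (auto simp: ids_def)
qed

private lemma card_cands: "card (chain_cands pi n c t i) \<le> n"
proof -
  have "chain_cands pi n c t i \<subseteq> {1..n}" using i by (auto simp: chain_cands_def)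
  then show ?thesis using card_mono[of "{1..n}"] by fastforce
qed

lemma rot_chain_at: "rot_chain pi n c t i i = t"
  using rot_upd_hd last_chain[OF card_cands pi_i target] by (simp add: rot_chain_def)

lemma rot_chain_other:
  assumes "p \<le> c" and "p \<noteq> i"
  shows "rot_chain pi n c t i p = pi p"
proof -
  have "p \<notin> set (i # chain pi n c t i n)" using assms ids_bounds(1) by fastforce
  then show ?thesis unfolding rot_chain_def by (rule rot_upd_other[OF ids_bounds(2)])
qed

text \<open>The traded value \<open>u\<close> sits at the last chain element inside the window \<open>{1..w}\<close>.\<close>

lemma rot_chain_image_window:
  assumes "c \<le> w" and "w \<le> n"
  obtains u where "u \<in> pi ` ({i} \<union> {c<..w})" "u \<le> t" "pi i \<le> u"
    and "\<forall>r. c < r \<and> r \<le> w \<and> pi r \<le> t \<longrightarrow> pi r \<le> u"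
    and "rot_chain pi n c t i ` {1..w} = (pi ` {1..w} - {u}) \<union> {t}"
proof -
  define ids where "ids = i # chain pi n c t i n"
  note ids = ids_bounds[folded ids_def]
  have "i \<le> w" using i assms(1) by simp
  from chain_prefix[OF this assms(2) card_cands pi_i, folded ids_def]
  obtain k where k: "k < length ids" "\<forall>x < length ids. ids ! x \<le> w \<longleftrightarrow> x \<le> k"
    "\<forall>r. c < r \<and> r \<le> w \<and> pi r \<le> t \<longrightarrow> pi r \<le> pi (ids ! k)" "pi (ids ! k) \<le> t"
    by blast
  have "pi (ids ! k) \<in> pi ` ({i} \<union> {c<..w})"
  proof (cases k)
    case (Suc k')
    then have "ids ! k \<in> set (chain pi n c t i n)" using k(1) by (simp add: ids_def)
    then show ?thesis using ids(1) k(1,2) by auto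
  qed (simp add: ids_def)
  moreover have "pi i \<le> pi (ids ! k)"
    using sorted_wrt_nth_less[OF ids(4), of 0 k] k(1) by (cases k) (auto simp: ids_def)
  moreover have "rot_chain pi n c t i ` {1..w} = (pi ` {1..w} - {pi (ids ! k)}) \<union> {t}"
  proof -
    have "rot_chain pi n c t i = rot_upd pi ids" by (simp add: rot_chain_def ids_def)
    moreover have "pi (last ids) = t" unfolding ids_def by (rule last_chain[OF card_cands pi_i target])
    moreover have "set ids \<subseteq> {1..n}" "ids \<noteq> []" using ids(3) by (auto simp: ids_def)
    ultimately show ?thesis
      using rot_upd_image_prefix[OF bij_betw_imp_inj_on[OF bij] ids(2) _ _ k(1,2) assms(2)] by simp
  qed
  ultimately show ?thesis using that k(3,4) by blast
qed

lemma rot_chain_bij: "bij_betw (rot_chain pi n c t i) {1..n} {1..n}"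
proof -
  obtain u where "u \<in> pi ` ({i} \<union> {c<..n})" "u \<le> t" "pi i \<le> u"
    and below_u: "\<forall>r. c < r \<and> r \<le> n \<and> pi r \<le> t \<longrightarrow> pi r \<le> u"
    and image: "rot_chain pi n c t i ` {1..n} = (pi ` {1..n} - {u}) \<union> {t}"
    by (rule rot_chain_image_window[OF c order.refl])
  have "t \<le> u \<and> t \<in> pi ` {1..n}"
  proof (cases "pi i = t")
    case True
    then show ?thesis using \<open>pi i \<le> u\<close> i c by (auto intro: rev_image_eqI)
  next
    case False
    then obtain q where "c < q" "q \<le> n" "pi q = t" using target by blast
    then show ?thesis using below_u by (auto intro: rev_image_eqI)
  qed
  then have "u = t" and "t \<in> pi ` {1..n}" using \<open>u \<le> t\<close> by auto
  then have "rot_chain pi n c t i ` {1..n} = {1..n}"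
    using image bij by (auto simp: bij_betw_def)
  then show ?thesis unfolding bij_betw_def by (auto intro: eq_card_imp_inj_on)
qed

end

definition greedy_box :: "nat \<Rightarrow> (nat \<Rightarrow> nat) \<Rightarrow> (nat \<Rightarrow> nat) \<Rightarrow> nat \<Rightarrow> (nat \<Rightarrow> nat) \<Rightarrow> nat \<Rightarrow> nat \<Rightarrow> nat"
where
  "greedy_box n A B c pi i = (if A i = B i then pi else rot_chain pi n c (B i) i)"

context
  fixes n c i :: nat and A B pi :: "nat \<Rightarrow> nat"
  assumes bij: "bij_betw pi {1..n} {1..n}" and c: "c \<le> n" and i: "1 \<le> i" "i \<le> c"
    and upper_rows: "\<forall>p. 1 \<le> p \<and> p \<le> i \<longrightarrow> pi p = A p"
    and lower_rows: "\<forall>p. i < p \<and> p \<le> c \<longrightarrow> pi p = B p"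
    and A_mono: "strict_mono_on {1..i} A" and B_mono: "strict_mono_on {i..c} B"
    and AB: "A i \<le> B i" and B_range: "B i \<in> {1..n}"
begin

private lemma pi_i: "pi i \<le> B i"
  using upper_rows i AB by simp

text \<open>The value \<open>B i\<close> is either already in row \<open>i\<close> or sits below row \<open>c\<close>: the rows above
  \<open>i\<close> carry smaller values of \<open>A\<close>, the rows from \<open>i + 1\<close> to \<open>c\<close> larger values of \<open>B\<close>.\<close>

private lemma target: "pi i = B i \<or> (\<exists>q. c < q \<and> q \<le> n \<and> pi q = B i)"
proof -
  obtain p where p: "p \<in> {1..n}" "pi p = B i"
    using B_range bij unfolding bij_betw_def by (metis imageE)
  consider "p < i" | "p = i" | "i < p" "p \<le> c" | "c < p" by linarith
  then show ?thesis
  proof cases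
    case 1
    then have "pi p < pi i" using p upper_rows i strict_mono_onD[OF A_mono, of p i] by simp
    then show ?thesis using p pi_i by simp
  next
    case 3
    then have "B i < pi p" using p lower_rows strict_mono_onD[OF B_mono, of i p] i by simp
    then show ?thesis using p by simp
  qed (use p in auto)
qed

lemma greedy_box_eq_rot_chain: "greedy_box n A B c pi i = rot_chain pi n c (B i) i"
proof (cases "A i = B i")
  case True
  obtain n' where "n = Suc n'" using c i by (cases n) auto
  moreover have "pi i = B i" using True upper_rows i by simp
  ultimately show ?thesis using True by (simp add: greedy_box_def rot_chain_def rot_upd_def fun_upd_idem)
qed (simp add: greedy_box_def)

lemma greedy_box_bij: "bij_betw (greedy_box n A B c pi i) {1..n} {1..n}"
  using rot_chain_bij[OF bij i c pi_i target] by (simp add: greedy_box_eq_rot_chain)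

lemma greedy_box_upper: "1 \<le> p \<Longrightarrow> p < i \<Longrightarrow> greedy_box n A B c pi i p = A p"
  using rot_chain_other[OF bij i c pi_i target, of p] upper_rows i
  by (simp add: greedy_box_eq_rot_chain)

lemma greedy_box_lower: "i \<le> p \<Longrightarrow> p \<le> c \<Longrightarrow> greedy_box n A B c pi i p = B p"
  using rot_chain_other[OF bij i c pi_i target, of p] rot_chain_at[OF bij i c pi_i target] lower_rows
  by (cases "p = i") (simp_all add: greedy_box_eq_rot_chain)

text \<open>A box step realises one step of greedy removal on the values of a window \<open>{1..w}\<close>
  of an earlier column.\<close>

lemma greedy_box_window_image:
  assumes w: "c \<le> w" "w \<le> n"
  defines "P \<equiv> pi ` ({1..i} \<union> {c<..w})"
  shows "greedy_box n A B c pi i ` ({1..i - 1} \<union> {c<..w}) = P - {Max {a\<in>P. a \<le> B i}}"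
proof -
  define t where "t = B i"
  define pi' where "pi' = greedy_box n A B c pi i"
  obtain u where u: "u \<in> pi ` ({i} \<union> {c<..w})" "u \<le> t" "pi i \<le> u"
      "\<forall>r. c < r \<and> r \<le> w \<and> pi r \<le> t \<longrightarrow> pi r \<le> u"
    and image: "pi' ` {1..w} = (pi ` {1..w} - {u}) \<union> {t}"
    using rot_chain_image_window[OF bij i c pi_i target w]
    unfolding pi'_def greedy_box_eq_rot_chain t_def by blast
  have max_u: "Max {a\<in>P. a \<le> t} = u"
  proof (rule Max_eqI)
    show "finite {a\<in>P. a \<le> t}" by (simp add: P_def)
    show "u \<in> {a\<in>P. a \<le> t}" using u(1,2) i by (auto simp: P_def)
    fix a assume "a \<in> {a\<in>P. a \<le> t}"
    then obtain r where r: "r \<in> {1..i} \<union> {c<..w}" "a = pi r" "a \<le> t"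
      unfolding P_def by blast
    show "a \<le> u"
    proof (cases "r \<in> {1..i}")
      case True
      then have "A r \<le> A i" using strict_mono_onD[OF A_mono, of r i] i by (cases "r = i") auto
      then show ?thesis using True r upper_rows u(3) i by simp
    qed (use r u(4) in auto)
  qed
  have eqs: "{1..i - 1} \<union> {c<..w} = {1..w} - {i..c}" "{1..i} \<union> {c<..w} = {1..w} - {i<..c}"
    and subs: "{1..w} - {i..c} \<subseteq> {1..n}" "{i..c} \<subseteq> {1..n}"
      "{1..w} - {i<..c} \<subseteq> {1..n}" "{i<..c} \<subseteq> {1..n}"
    using i w c by auto
  have pi'_diff: "pi' ` ({1..i - 1} \<union> {c<..w}) = pi' ` {1..w} - pi' ` {i..c}"
    unfolding eqs pi'_def
    by (rule inj_on_image_set_diff[OF bij_betw_imp_inj_on[OF greedy_box_bij] subs(1,2)])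
  have P_diff: "P = pi ` {1..w} - pi ` {i<..c}"
    unfolding eqs P_def by (rule inj_on_image_set_diff[OF bij_betw_imp_inj_on[OF bij] subs(3,4)])
  have "{i..c} = insert i {i<..c}" using i by auto
  moreover have "pi' i = t" using greedy_box_lower[of i] i by (simp add: pi'_def t_def)
  moreover have "pi' ` {i<..c} = pi ` {i<..c}"
    using greedy_box_lower lower_rows by (auto simp: pi'_def intro!: image_cong)
  ultimately have "pi' ` {i..c} = {t} \<union> pi ` {i<..c}" by simp
  moreover have "t \<in> P \<Longrightarrow> u = t"
    using max_u u(2) Max_ge[of "{a\<in>P. a \<le> t}" t] by (simp add: P_def)
  ultimately have "pi' ` ({1..i - 1} \<union> {c<..w}) = P - {u}" unfolding pi'_diff image P_diff by auto
  then show ?thesis using max_u by (simp add: pi'_def t_def)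
qed

lemma greedy_box_window:
  assumes w: "c \<le> w" "w \<le> n"
    and window: "pi ` ({1..i} \<union> {c<..w}) = greedy_remove R (map B (rev [Suc i..<c + 1]))"
    and removable: "greedy_removable R (map B (rev [Suc i..<c + 1]))"
  shows "greedy_box n A B c pi i ` ({1..i - 1} \<union> {c<..w}) = greedy_remove R (map B (rev [i..<c + 1]))
    \<and> greedy_removable R (map B (rev [i..<c + 1]))"
proof -
  have "[i..<c + 1] = i # [Suc i..<c + 1]" using i by (simp add: upt_conv_Cons)
  then have desc: "map B (rev [i..<c + 1]) = map B (rev [Suc i..<c + 1]) @ [B i]" by simp
  have "pi i \<in> pi ` ({1..i} \<union> {c<..w})" using i by auto
  then show ?thesis
    using greedy_box_window_image[OF w] window removable pi_i
    unfolding desc greedy_remove_append greedy_removable_append by auto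
qed

end

text \<open>The state of the greedy procedure inside a column \<open>B\<close> (following the column \<open>A\<close>) after
  its rows \<open>c, \<dots>, i + 1\<close> have been processed; \<open>W\<close> is a set of windows.\<close>

definition col_state ::
  "nat \<Rightarrow> (nat \<Rightarrow> nat) \<Rightarrow> (nat \<Rightarrow> nat) \<Rightarrow> nat \<Rightarrow> (nat \<times> nat set) set \<Rightarrow> nat \<Rightarrow> (nat \<Rightarrow> nat) \<Rightarrow> bool"
where
  "col_state n A B c W i pi \<longleftrightarrow> bij_betw pi {1..n} {1..n}
     \<and> (\<forall>p. 1 \<le> p \<and> p \<le> i \<longrightarrow> pi p = A p) \<and> (\<forall>p. i < p \<and> p \<le> c \<longrightarrow> pi p = B p)
     \<and> (\<forall>(w, R) \<in> W. pi ` ({1..i} \<union> {c<..w}) = greedy_remove R (map B (rev [Suc i..<c + 1]))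
          \<and> greedy_removable R (map B (rev [Suc i..<c + 1])))"

lemma col_state_fold:
  assumes c: "c \<le> n" and A_mono: "strict_mono_on {1..c} A" and B_mono: "strict_mono_on {1..c} B"
    and AB: "\<forall>p. 1 \<le> p \<and> p \<le> c \<longrightarrow> A p \<le> B p \<and> B p \<in> {1..n}"
    and W: "\<forall>(w, R) \<in> W. c \<le> w \<and> w \<le> n"
  shows "k \<le> c \<Longrightarrow> col_state n A B c W k pi
    \<Longrightarrow> col_state n A B c W 0 (fold (\<lambda>i pi. greedy_box n A B c pi i) (rev [1..<k + 1]) pi)"
proof (induction k arbitrary: pi)
  case (Suc k)
  define i where "i = Suc k"
  have i: "1 \<le> i" "i \<le> c" using Suc.prems(1) by (auto simp: i_def)
  have state: "bij_betw pi {1..n} {1..n}" "\<forall>p. 1 \<le> p \<and> p \<le> i \<longrightarrow> pi p = A p"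
    "\<forall>p. i < p \<and> p \<le> c \<longrightarrow> pi p = B p"
    "\<forall>(w, R) \<in> W. pi ` ({1..i} \<union> {c<..w}) = greedy_remove R (map B (rev [Suc i..<c + 1]))
          \<and> greedy_removable R (map B (rev [Suc i..<c + 1]))"
    using Suc.prems(2) by (auto simp: col_state_def i_def)
  have A_i: "strict_mono_on {1..i} A" using A_mono by (rule monotone_on_subset) (use i in auto)
  have B_i: "strict_mono_on {i..c} B" using B_mono by (rule monotone_on_subset) (use i in auto)
  have AB_i: "A i \<le> B i" "B i \<in> {1..n}" using AB i by auto
  note box = greedy_box_bij[OF state(1) c i state(2,3) A_i B_i AB_i]
    greedy_box_upper[OF state(1) c i state(2,3) A_i B_i AB_i]
    greedy_box_lower[OF state(1) c i state(2,3) A_i B_i AB_i]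
    greedy_box_window[OF state(1) c i state(2,3) A_i B_i AB_i]
  have "greedy_box n A B c pi i ` ({1..k} \<union> {c<..w}) = greedy_remove R (map B (rev [Suc k..<c + 1]))
    \<and> greedy_removable R (map B (rev [Suc k..<c + 1]))" if "(w, R) \<in> W" for w R
  proof -
    have "c \<le> w" "w \<le> n" using W that by auto
    moreover have "pi ` ({1..i} \<union> {c<..w}) = greedy_remove R (map B (rev [Suc i..<c + 1]))"
      "greedy_removable R (map B (rev [Suc i..<c + 1]))"
      using bspec[OF state(4) that] by simp_all
    ultimately show ?thesis using box(4) by (simp add: i_def)
  qed
  then have "col_state n A B c W k (greedy_box n A B c pi i)"
    using box(1-3) unfolding col_state_def by (auto simp: i_def simp del: upt_Suc)
  then show ?case using Suc.IH Suc.prems(1) by (simp add: i_def)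
qed simp

section \<open>The greedy procedure on a semistandard tableau\<close>

lemma col_len_le: "is_partition n lam \<Longrightarrow> col_len lam j \<le> n"
  unfolding is_partition_def col_len_def by (metis length_filter_le)

lemma col_len_antimono: "j \<le> j' \<Longrightarrow> col_len lam j' \<le> col_len lam j"
proof -
  assume "j \<le> j'"
  then have "filter (\<lambda>r. j' \<le> r) lam = filter (\<lambda>r. j' \<le> r) (filter (\<lambda>r. j \<le> r) lam)"
    by (auto simp: filter_filter intro!: filter_cong)
  then show ?thesis unfolding col_len_def by (metis length_filter_le)
qed

lemma mem_shape_iff: "(j, i) \<in> shape lam \<longleftrightarrow> 1 \<le> j \<and> j \<le> lam1 lam \<and> 1 \<le> i \<and> i \<le> col_len lam j"
  by (simp add: shape_def)

context
  fixes n lam T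
  assumes ss: "semistandard n lam T"
begin

lemma semistandard_range: "(j, i) \<in> shape lam \<Longrightarrow> 1 \<le> T j i \<and> T j i \<le> n"
  using ss by (auto simp: semistandard_def)

lemma semistandard_row_mono:
  assumes "(j + 1, i) \<in> shape lam" and "1 \<le> j"
  shows "T j i \<le> T (j + 1) i"
proof -
  have "(j, i) \<in> shape lam"
    using assms col_len_antimono[of j "j + 1" lam] by (auto simp: mem_shape_iff)
  then show ?thesis using assms ss by (auto simp: semistandard_def)
qed

lemma semistandard_col_mono:
  assumes "1 \<le> j" and "j \<le> lam1 lam"
  shows "strict_mono_on {1..col_len lam j} (T j)"
proof (rule strict_mono_onI)
  fix a b assume "a \<in> {1..col_len lam j}" "b \<in> {1..col_len lam j}" "a < b"
  then show "T j a < T j b"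
  proof (induction b)
    case (Suc b)
    then have "(j, b) \<in> shape lam" "(j, b + 1) \<in> shape lam" using assms by (auto simp: mem_shape_iff)
    then have "T j b < T j (Suc b)" using ss by (auto simp: semistandard_def)
    then show ?case using Suc by (cases "a = b") auto
  qed simp
qed

end

lemma sorted_col_desc: "strict_mono_on {1..k} (T l) \<Longrightarrow> sorted_wrt (>) (col_desc T l k)"
  unfolding col_desc_def sorted_wrt_map sorted_wrt_rev
  by (rule sorted_wrt_mono_rel[OF _ sorted_wrt_upt]) (auto intro: strict_mono_onD)

lemma sweep_self: "sweep lam T j j = col_desc T j (col_len lam j)"
  by (simp add: sweep_def)

lemma sweep_Suc: "j \<le> l \<Longrightarrow> sweep lam T j (Suc l) = col_sweep T (Suc l) (col_len lam (Suc l)) (sweep lam T j l)"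
  by (simp add: sweep_def)

lemma length_sweep: "length (sweep lam T j l) = col_len lam j"
proof -
  have "length (fold (\<lambda>l' xs. col_sweep T l' (col_len lam l') xs) ls xs) = length xs" for ls xs
    by (induction ls arbitrary: xs) auto
  then show ?thesis by (simp add: sweep_def)
qed

definition greedy_inv :: "nat \<Rightarrow> nat list \<Rightarrow> (nat \<Rightarrow> nat \<Rightarrow> nat) \<Rightarrow> nat \<Rightarrow> (nat \<Rightarrow> nat) \<Rightarrow> bool" where
  "greedy_inv n lam T l pi \<longleftrightarrow> bij_betw pi {1..n} {1..n}
     \<and> (\<forall>p. 1 \<le> p \<and> p \<le> col_len lam l \<longrightarrow> pi p = T l p)
     \<and> (\<forall>j. 1 \<le> j \<and> j \<le> l \<longrightarrow> pi ` {1..col_len lam j} = set (sweep lam T j l)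
            \<and> sorted_wrt (>) (sweep lam T j l))"

lemma greedy_inv_first:
  assumes ip: "is_partition n lam" and ss: "semistandard n lam T" and lam1: "1 \<le> lam1 lam"
  shows "greedy_inv n lam T 1 (pi11 n lam T)"
proof -
  define c where "c = col_len lam 1"
  define S where "S = sorted_list_of_set ({1..n} - T 1 ` {1..c})"
  define pi where "pi = pi11 n lam T"
  have c: "c \<le> n" unfolding c_def by (rule col_len_le[OF ip])
  have pi_eq: "pi p = (if 1 \<le> p \<and> p \<le> c then T 1 p else S ! (p - c - 1))" for p
    by (simp add: pi_def pi11_def S_def c_def)
  have mono: "strict_mono_on {1..c} (T 1)"
    unfolding c_def by (rule semistandard_col_mono[OF ss order.refl lam1])
  have col: "T 1 ` {1..c} \<subseteq> {1..n}"
    using semistandard_range[OF ss] lam1 by (fastforce simp: c_def mem_shape_iff)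
  have "card (T 1 ` {1..c}) = c" using card_image[OF strict_mono_on_imp_inj_on[OF mono]] by simp
  then have len_S: "length S = n - c" using card_Diff_subset[OF _ col] by (simp add: S_def)
  have upper: "pi ` {1..c} = T 1 ` {1..c}" using pi_eq by (intro image_cong) auto
  have shift: "(\<lambda>k. k + (c + 1)) ` {0..<length S} = {c<..n}"
    using c len_S by (simp only: image_add_atLeastLessThan') auto
  have "pi ` {c<..n} = (\<lambda>k. pi (k + (c + 1))) ` {0..<length S}"
    unfolding shift[symmetric] image_image ..
  also have "\<dots> = nth S ` {0..<length S}" by (rule image_cong) (simp_all add: pi_eq)
  also have "\<dots> = {1..n} - T 1 ` {1..c}" by (simp add: nth_image S_def)
  finally have lower: "pi ` {c<..n} = {1..n} - T 1 ` {1..c}" .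
  have "pi ` ({1..c} \<union> {c<..n}) = {1..n}" using upper lower col by (simp only: image_Un) blast
  moreover have "{1..c} \<union> {c<..n} = {1..n}" using c by auto
  ultimately have "pi ` {1..n} = {1..n}" by simp
  then have "bij_betw pi {1..n} {1..n}" by (simp add: bij_betw_def eq_card_imp_inj_on)
  moreover have "sorted_wrt (>) (col_desc T 1 c)" using mono by (rule sorted_col_desc)
  ultimately show ?thesis
    using upper pi_eq by (auto simp: greedy_inv_def sweep_self set_col_desc pi_def[symmetric] c_def)
qed


lemma fold_gstep_column:
  "fold (\<lambda>b pi. gstep n lam T pi b) (map (\<lambda>i. (Suc l, i)) is) pi
   = fold (\<lambda>i pi. greedy_box n (T l) (T (Suc l)) (col_len lam (Suc l)) pi i) is pi"
proof -
  have "(\<lambda>b pi. gstep n lam T pi b) \<circ> (\<lambda>i. (Suc l, i))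
      = (\<lambda>i pi. greedy_box n (T l) (T (Suc l)) (col_len lam (Suc l)) pi i)"
    by (auto simp: fun_eq_iff gstep_def greedy_box_def rot_chain_def)
  then show ?thesis by (simp add: fold_map)
qed

definition sweep_windows :: "nat list \<Rightarrow> (nat \<Rightarrow> nat \<Rightarrow> nat) \<Rightarrow> nat \<Rightarrow> (nat \<times> nat set) set" where
  "sweep_windows lam T l = {(col_len lam j, set (sweep lam T j l)) | j. 1 \<le> j \<and> j \<le> l}"

lemma col_state_start:
  assumes "greedy_inv n lam T l pi" and "1 \<le> l"
  defines "c \<equiv> col_len lam (Suc l)"
  shows "col_state n (T l) (T (Suc l)) c (sweep_windows lam T l) c pi"
proof -
  have c_le: "c \<le> col_len lam j" if "j \<le> l" for j
    using that col_len_antimono[of j "Suc l" lam] by (simp add: c_def)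
  have "pi ` ({1..c} \<union> {c<..col_len lam j}) = set (sweep lam T j l)" if "1 \<le> j" "j \<le> l" for j
  proof -
    have "{1..c} \<union> {c<..col_len lam j} = {1..col_len lam j}" using c_le[OF that(2)] by auto
    then show ?thesis using assms(1) that by (simp add: greedy_inv_def)
  qed
  then show ?thesis
    using assms(1,2) c_le[of l] by (auto simp: col_state_def sweep_windows_def greedy_inv_def)
qed

lemma greedy_inv_of_col_state:
  assumes inv: "greedy_inv n lam T l pi"
    and state: "col_state n (T l) (T (Suc l)) c (sweep_windows lam T l) 0 pi'"
    and c: "c = col_len lam (Suc l)" and B_mono: "strict_mono_on {1..c} (T (Suc l))"
  shows "greedy_inv n lam T (Suc l) pi'"
proof -
  have desc: "map (T (Suc l)) (rev [Suc 0..<c + 1]) = col_desc T (Suc l) c"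
    by (simp add: col_desc_def)
  have windows: "\<forall>(w, R) \<in> sweep_windows lam T l. pi' ` ({1..0} \<union> {c<..w})
      = greedy_remove R (col_desc T (Suc l) c) \<and> greedy_removable R (col_desc T (Suc l) c)"
    using state unfolding col_state_def desc by blast
  have upper: "pi' ` {1..c} = T (Suc l) ` {1..c}"
    using state by (auto simp: col_state_def intro!: image_cong)
  have "pi' ` {1..col_len lam j} = set (sweep lam T j (Suc l)) \<and> sorted_wrt (>) (sweep lam T j (Suc l))"
    if j: "1 \<le> j" "j \<le> Suc l" for j
  proof (cases "j = Suc l")
    case True
    then show ?thesis using upper sorted_col_desc[of c T "Suc l", OF B_mono]
      by (simp add: sweep_self set_col_desc c)
  next
    case False
    then have "j \<le> l" using j by simp
    then have "(col_len lam j, set (sweep lam T j l)) \<in> sweep_windows lam T l"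
      using j by (auto simp: sweep_windows_def)
    then have window: "pi' ` {c<..col_len lam j} = greedy_remove (set (sweep lam T j l)) (col_desc T (Suc l) c)"
      and removable: "greedy_removable (set (sweep lam T j l)) (col_desc T (Suc l) c)"
      using bspec[OF windows] by auto
    have "{1..col_len lam j} = {1..c} \<union> {c<..col_len lam j}"
      using col_len_antimono[of j "Suc l" lam] \<open>j \<le> l\<close> c by auto
    moreover have "sorted_wrt (>) (sweep lam T j l)" using inv j(1) \<open>j \<le> l\<close> by (simp add: greedy_inv_def)
    ultimately show ?thesis
      using set_col_sweep[OF _ B_mono removable] upper window sweep_Suc[OF \<open>j \<le> l\<close>]
      by (simp add: image_Un set_col_desc c)
  qed
  then show ?thesis using state by (auto simp: greedy_inv_def col_state_def c)
qed

lemma greedy_inv_Suc: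
  assumes ip: "is_partition n lam" and ss: "semistandard n lam T"
    and l: "1 \<le> l" "Suc l \<le> lam1 lam" and inv: "greedy_inv n lam T l pi"
  shows "greedy_inv n lam T (Suc l) (fold (\<lambda>b pi. gstep n lam T pi b)
           (map (\<lambda>i. (Suc l, i)) (rev [1..<col_len lam (Suc l) + 1])) pi)"
proof -
  define c where "c = col_len lam (Suc l)"
  have c: "c \<le> n" by (simp add: c_def col_len_le[OF ip])
  have A_mono: "strict_mono_on {1..c} (T l)"
    using semistandard_col_mono[OF ss l(1)] l(2) col_len_antimono[of l "Suc l" lam]
    by (auto simp: c_def intro: monotone_on_subset)
  have B_mono: "strict_mono_on {1..c} (T (Suc l))"
    using semistandard_col_mono[OF ss _ l(2)] by (simp add: c_def)
  have AB: "\<forall>p. 1 \<le> p \<and> p \<le> c \<longrightarrow> T l p \<le> T (Suc l) p \<and> T (Suc l) p \<in> {1..n}"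
    using semistandard_row_mono[OF ss] semistandard_range[OF ss] l
    by (fastforce simp: c_def mem_shape_iff)
  have W: "\<forall>(w, R) \<in> sweep_windows lam T l. c \<le> w \<and> w \<le> n"
    using col_len_antimono[of _ "Suc l" lam] col_len_le[OF ip] by (auto simp: sweep_windows_def c_def)
  from col_state_fold[OF c A_mono B_mono AB W order.refl col_state_start[OF inv l(1), folded c_def]]
  show ?thesis
    by (simp add: fold_gstep_column c_def greedy_inv_of_col_state[OF inv _ c_def B_mono, unfolded c_def])
qed

definition greedy_upto :: "nat \<Rightarrow> nat list \<Rightarrow> (nat \<Rightarrow> nat \<Rightarrow> nat) \<Rightarrow> nat \<Rightarrow> nat \<Rightarrow> nat" where
  "greedy_upto n lam T l =
     fold (\<lambda>j pi. fold (\<lambda>b pi. gstep n lam T pi b) (map (\<lambda>i. (j, i)) (rev [1..<col_len lam j + 1])) pi)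
       [2..<l + 1] (pi11 n lam T)"

lemma fold_concat: "fold f (concat xss) = fold (fold f) xss"
  by (induction xss) auto

lemma piT_eq_greedy_upto: "piT n lam T = greedy_upto n lam T (lam1 lam)"
  unfolding piT_def greedy_upto_def greedy_boxes_def fold_concat by (simp add: fold_map comp_def)

lemma greedy_inv_upto:
  assumes "is_partition n lam" and "semistandard n lam T" and "1 \<le> l" and "l \<le> lam1 lam"
  shows "greedy_inv n lam T l (greedy_upto n lam T l)"
  using assms(3,4)
proof (induction l rule: dec_induct)
  case base
  then show ?case using greedy_inv_first[OF assms(1,2)] by (simp add: greedy_upto_def)
next
  case (step l)
  then show ?case using greedy_inv_Suc[OF assms(1,2)] by (simp add: greedy_upto_def)
qed

lemma sorted_list_of_set_set_desc:
  assumes "sorted_wrt (>) xs"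
  shows "sorted_list_of_set (set xs) = rev xs"
proof -
  have "sorted_wrt (<) (rev xs)" using assms by (simp add: sorted_wrt_rev)
  then have "sorted (rev xs)" "distinct (rev xs)" by (simp_all add: strict_sorted_iff)
  then show ?thesis
    using sorted_list_of_set_sort_remdups[of "rev xs"] by (simp add: distinct_remdups_id sorted_sort_id)
qed

theorem Ytab_piT_eq_scanS:
  assumes "is_partition n lam" and "semistandard n lam T" and "(j, i) \<in> shape lam"
  shows "Ytab lam (piT n lam T) j i = scanS lam T j i"
proof -
  have ji: "1 \<le> j" "j \<le> lam1 lam" "1 \<le> i" "i \<le> col_len lam j"
    using assms(3) by (auto simp: mem_shape_iff)
  have "greedy_inv n lam T (lam1 lam) (piT n lam T)"
    using greedy_inv_upto[OF assms(1,2)] ji by (simp add: piT_eq_greedy_upto)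
  then have K: "piT n lam T ` {1..col_len lam j} = set (sweep lam T j (lam1 lam))"
    "sorted_wrt (>) (sweep lam T j (lam1 lam))"
    using ji by (auto simp: greedy_inv_def)
  have "Ytab lam (piT n lam T) j i = rev (sweep lam T j (lam1 lam)) ! (i - 1)"
    unfolding Ytab_def K(1) sorted_list_of_set_set_desc[OF K(2)] ..
  also have "\<dots> = sweep lam T j (lam1 lam) ! (col_len lam j - i)"
    using ji by (simp add: rev_nth length_sweep)
  also have "\<dots> = scanS lam T j i" using scanS_eq_sweep ji by simp
  finally show ?thesis .
qed

theorem corollary5p3:
  fixes n :: nat and lam :: "nat list" and T :: "nat \<Rightarrow> nat \<Rightarrow> nat"
  assumes "0 < n"
    and "is_partition n lam"
    and "lam \<noteq> replicate n 0"
    and "lam ! (n - 1) = 0"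
    and "semistandard n lam T"
  shows "\<forall>(j, i) \<in> shape lam. Ytab lam (piT n lam T) j i = scanS lam T j i"
  using Ytab_piT_eq_scanS[OF assms(2,5)] by blast

end
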